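(* Let $n\ge 2$ and let $A$ be an associative (not necessarily unital) algebra over a field satisfying the identity $x_1x_2\cdots x_{n-1}x_n=x_nx_2\cdots x_{n-1}x_1$ (i.e. the identity associated with the transposition $(1\,n)\in S_n$). Then $A$ is eventually commutative of degree $n+1$.
   Context: An algebra $A$ satisfies an identity $x_1\cdots x_m=x_{\tau(1)}\cdots x_{\tau(m)}$ (with $\tau\in S_m$) if $a_1\cdots a_m=a_{\tau(1)}\cdots a_{\tau(m)}$ for all $a_1,\dots,a_m\in A$. $A$ is eventually commutative of degree $k$ if it satisfies $x_1\cdots x_k=x_{\tau(1)}\cdots x_{\tau(k)}$ for every $\tau\in S_k$. *)

theory Defs
  imports Main "HOL-Combinatorics.Permutations" "HOL-Combinatorics.Transposition"
begin

text \<open>Associative, not necessarily unital, algebra over a field 'k: the carrier type 'a is a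
(non-unital) ring (type class ring has no 1), and s is a scalar multiplication making 'a a
'k-vector space such that multiplication is bilinear.\<close>
definition assoc_algebra :: "('k::field \<Rightarrow> 'a::ring \<Rightarrow> 'a) \<Rightarrow> bool" where
  "assoc_algebra s \<longleftrightarrow>
     (\<forall>a b x. s a (s b x) = s (a * b) x) \<and>
     (\<forall>x. s 1 x = x) \<and>
     (\<forall>a x y. s a (x + y) = s a x + s a y) \<and>
     (\<forall>a b x. s (a + b) x = s a x + s b x) \<and>
     (\<forall>a x y. s a (x * y) = s a x * y \<and> s a (x * y) = x * s a y)"

text \<open>Product x1 x2 ... xm of a nonempty word (no unit needed).\<close>
definition wprod :: "'a::semigroup_mult list \<Rightarrow> 'a" where
  "wprod xs = foldl (*) (hd xs) (tl xs)"

text \<open>A satisfies x_0 ... x_(m-1) = x_tau(0) ... x_tau(m-1) (0-indexed letters).\<close>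
definition satisfies_identity :: "'a::semigroup_mult itself \<Rightarrow> nat \<Rightarrow> (nat \<Rightarrow> nat) \<Rightarrow> bool" where
  "satisfies_identity _ m \<tau> \<longleftrightarrow>
     (\<forall>a :: nat \<Rightarrow> 'a. wprod (map a [0..<m]) = wprod (map (a \<circ> \<tau>) [0..<m]))"

definition eventually_commutative :: "'a::semigroup_mult itself \<Rightarrow> nat \<Rightarrow> bool" where
  "eventually_commutative T k \<longleftrightarrow> (\<forall>\<tau>. \<tau> permutes {..<k} \<longrightarrow> satisfies_identity T k \<tau>)"

end

theory Submission
  imports Defs
begin

text \<open>Read the identity as: the two end letters of any word of length n may be exchanged.
In words of length n+1 this yields three moves: exchanging the end letters (multiply two inner
letters together first), exchanging the first letter with the last but one (multiply the prefix
of length n on the right), and rotating the n-1 inner letters cyclically (multiply the first two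
letters together, then exchange ends twice). Conjugating the second move by rotations exchanges
the first letter with any other one, so every transposition (0 j) gives an identity of degree
n+1. Identities of a fixed degree are closed under composition of their permutations, and the
transpositions (0 j) generate the symmetric group.\<close>

lemma wprod_snoc: "xs \<noteq> [] \<Longrightarrow> wprod (xs @ [y]) = wprod xs * (y::'a::semigroup_mult)"
  by (cases xs) (simp_all add: wprod_def)

lemma wprod_merge: "wprod (p @ (x::'a::semigroup_mult) * y # q) = wprod (p @ x # y # q)"
  by (cases p) (simp_all add: wprod_def mult.assoc)

lemma permute_list_transpose:
  assumes "i < length xs" "j < length xs"
  shows "permute_list (transpose i j) xs = xs[i := xs ! j, j := xs ! i]"
  using assms permute_list_nth[OF permutes_swap_id[of i "{..<length xs}" j]]
  by (intro nth_equalityI) (auto simp: nth_list_update transpose_def)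

lemma permute_list_transpose_0:
  "permute_list (transpose 0 (length u + 1)) (x # u @ y # v) = y # u @ x # v"
  by (simp add: permute_list_transpose nth_append list_update_append)

lemma satisfies_identity_iff_permute_list:
  assumes "\<tau> permutes {..<m}"
  shows "satisfies_identity TYPE('a::semigroup_mult) m \<tau> \<longleftrightarrow>
    (\<forall>xs::'a list. length xs = m \<longrightarrow> wprod (permute_list \<tau> xs) = wprod xs)"
proof
  assume sat: "satisfies_identity TYPE('a) m \<tau>"
  show "\<forall>xs::'a list. length xs = m \<longrightarrow> wprod (permute_list \<tau> xs) = wprod xs"
  proof (intro allI impI)
    fix xs :: "'a list" assume "length xs = m"
    with sat have "wprod (map ((!) xs) [0..<length xs]) = wprod (map ((!) xs \<circ> \<tau>) [0..<length xs])"
      unfolding satisfies_identity_def by blast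
    then show "wprod (permute_list \<tau> xs) = wprod xs"
      by (simp add: permute_list_def map_nth comp_def)
  qed
next
  assume perm_inv: "\<forall>xs::'a list. length xs = m \<longrightarrow> wprod (permute_list \<tau> xs) = wprod xs"
  show "satisfies_identity TYPE('a) m \<tau>"
    unfolding satisfies_identity_def
  proof
    fix a :: "nat \<Rightarrow> 'a"
    have "permute_list \<tau> (map a [0..<m]) = map (a \<circ> \<tau>) [0..<m]"
      using permutes_in_image[OF assms] by (auto simp: permute_list_def)
    then show "wprod (map a [0..<m]) = wprod (map (a \<circ> \<tau>) [0..<m])"
      using perm_inv by (metis length_map length_upt minus_nat.diff_0)
  qed
qed

lemma Cons_append_Cons_split:
  assumes "0 < j" "j < length xs"
  obtains x u y v where "xs = x # u @ y # v" "length u + 1 = j"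
proof -
  obtain x r where xs: "xs = x # r" using assms by (cases xs) auto
  then have "xs = x # take (j - 1) r @ r ! (j - 1) # drop j r"
    using assms id_take_nth_drop[of "j - 1" r] by simp
  moreover have "length (take (j - 1) r) + 1 = j" using xs assms by simp
  ultimately show thesis by (rule that)
qed

lemma satisfies_identity_transpose_0_iff:
  assumes "0 < j" "j < m"
  shows "satisfies_identity TYPE('a::semigroup_mult) m (transpose 0 j) \<longleftrightarrow>
    (\<forall>(x::'a) u y v. length u + 1 = j \<longrightarrow> length u + length v + 2 = m \<longrightarrow>
      wprod (x # u @ y # v) = wprod (y # u @ x # v))"
proof -
  have "transpose 0 j permutes {..<m}" using assms by (intro permutes_swap_id) auto
  then have "satisfies_identity TYPE('a) m (transpose 0 j) \<longleftrightarrow>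
      (\<forall>xs::'a list. length xs = m \<longrightarrow> wprod (permute_list (transpose 0 j) xs) = wprod xs)"
    by (rule satisfies_identity_iff_permute_list)
  also have "\<dots> \<longleftrightarrow> (\<forall>(x::'a) u y v. length u + 1 = j \<longrightarrow> length u + length v + 2 = m \<longrightarrow>
      wprod (x # u @ y # v) = wprod (y # u @ x # v))"
  proof (intro iffI allI impI)
    fix x y :: 'a and u v :: "'a list"
    assume perm_inv: "\<forall>xs::'a list. length xs = m \<longrightarrow> wprod (permute_list (transpose 0 j) xs) = wprod xs"
      and j: "length u + 1 = j" and "length u + length v + 2 = m"
    then have "length (x # u @ y # v) = m" by simp
    with perm_inv have "wprod (permute_list (transpose 0 j) (x # u @ y # v)) = wprod (x # u @ y # v)"
      by blast
    then show "wprod (x # u @ y # v) = wprod (y # u @ x # v)"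
      by (simp only: j[symmetric] permute_list_transpose_0)
  next
    fix xs :: "'a list"
    assume swap: "\<forall>(x::'a) u y v. length u + 1 = j \<longrightarrow> length u + length v + 2 = m \<longrightarrow>
      wprod (x # u @ y # v) = wprod (y # u @ x # v)" and "length xs = m"
    obtain x u y v where xs: "xs = x # u @ y # v" and j: "length u + 1 = j"
      using assms \<open>length xs = m\<close> by (blast elim: Cons_append_Cons_split)
    have "length u + length v + 2 = m" using \<open>length xs = m\<close> xs by simp
    with swap j have "wprod (x # u @ y # v) = wprod (y # u @ x # v)" by blast
    then show "wprod (permute_list (transpose 0 j) xs) = wprod xs"
      by (simp only: xs j[symmetric] permute_list_transpose_0)
  qed
  finally show ?thesis .
qed

lemma satisfies_identity_comp:
  assumes "satisfies_identity T m \<sigma>" and "satisfies_identity T m \<tau>"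
  shows "satisfies_identity T m (\<sigma> \<circ> \<tau>)"
  using assms unfolding satisfies_identity_def by (metis comp_assoc)

lemma satisfies_identity_transpose:
  assumes "\<And>j. j < m \<Longrightarrow> satisfies_identity T m (transpose 0 j)" and "a < m" "b < m"
  shows "satisfies_identity T m (transpose a b)"
proof -
  consider "a = 0" | "b = 0" | "a = b" | "a \<noteq> b" "a \<noteq> 0" "b \<noteq> 0" by blast
  then show ?thesis
  proof cases
    case 1
    then show ?thesis using assms by simp
  next
    case 2
    then show ?thesis using assms by (metis transpose_commute)
  next
    case 3
    then show ?thesis using assms(1)[of 0] \<open>a < m\<close> by simp
  next
    case 4
    then have "transpose a b = transpose 0 a \<circ> transpose 0 b \<circ> transpose 0 a"
      by (auto simp: fun_eq_iff transpose_def)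
    then show ?thesis using assms by (simp add: satisfies_identity_comp)
  qed
qed

lemma eventually_commutativeI:
  assumes "\<And>j. j < k \<Longrightarrow> satisfies_identity T k (transpose 0 j)"
  shows "eventually_commutative T k"
  unfolding eventually_commutative_def
proof (intro allI impI)
  fix \<tau> assume "\<tau> permutes {..<k}"
  from this finite_lessThan show "satisfies_identity T k \<tau>"
  proof (induction rule: permutes_induct)
    case id
    then show ?case by (simp add: satisfies_identity_def comp_def)
  next
    case (swap a b p)
    then have "satisfies_identity T k (transpose a b)"
      by (intro satisfies_identity_transpose[OF assms]) auto
    with swap show ?case by (intro satisfies_identity_comp)
  qed
qed

context
  fixes n :: nat
  assumes n_ge_2: "2 \<le> n"
    and end_swap: "\<And>(x::'a::semigroup_mult) M y. length M + 2 = n \<Longrightarrow>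
      wprod (x # M @ [y]) = wprod (y # M @ [x])"
begin

lemma end_swap_snoc:
  assumes "length M + 2 = n"
  shows "wprod ((x::'a) # M @ [y, w]) = wprod (y # M @ [x, w])"
  using end_swap[OF assms, of x y] wprod_snoc[of "x # M @ [y]" w] wprod_snoc[of "y # M @ [x]" w]
  by simp

lemma end_swap_Suc:
  assumes "length M + 1 = n"
  shows "wprod ((x::'a) # M @ [y]) = wprod (y # M @ [x])"
proof (cases "n = 2")
  case True
  then obtain m where M: "M = [m]" using assms by (cases M) auto
  have comm: "u * v = v * u" for u v :: 'a
    using end_swap[of "[]" u v] True by (simp add: wprod_def)
  have "x * m * y = y * m * x" by (metis comm mult.assoc)
  then show ?thesis by (simp add: M wprod_def)
next
  case False
  then obtain m1 m2 M' where M: "M = m1 # m2 # M'" and "length M' + 3 = n"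
    using assms n_ge_2 by (cases M; cases "tl M") auto
  then have "wprod (x # (m1 * m2) # M' @ [y]) = wprod (y # (m1 * m2) # M' @ [x])"
    using end_swap[of "(m1 * m2) # M'"] by simp
  then show ?thesis using wprod_merge[of "[_]" m1 m2] by (simp add: M)
qed

lemma wprod_rotate1_middle:
  assumes "length A + 1 = n"
  shows "wprod ((x::'a) # A @ [z]) = wprod (x # rotate1 A @ [z])"
proof -
  obtain a M where A: "A = a # M" and M: "length M + 2 = n"
    using assms n_ge_2 by (cases A) auto
  have "wprod (x # a # M @ [z]) = wprod ((x * a) # M @ [z])"
    by (simp add: wprod_def)
  also have "\<dots> = wprod (z # M @ [x * a])" by (rule end_swap[OF M])
  also have "\<dots> = wprod (z # (M @ [x]) @ [a])"
    using wprod_merge[of "z # M" x a "[]"] by simp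
  also have "\<dots> = wprod (a # (M @ [x]) @ [z])" by (rule end_swap_Suc) (use M in simp)
  also have "\<dots> = wprod (x # M @ [a, z])" using end_swap_snoc[OF M, of a x z] by simp
  finally show ?thesis by (simp add: A)
qed

lemma wprod_rotate_middle:
  assumes "length A + 1 = n"
  shows "wprod ((x::'a) # A @ [z]) = wprod (x # rotate k A @ [z])"
proof (induction k)
  case (Suc k)
  then show ?case using wprod_rotate1_middle[of "rotate k A" x z] assms by simp
qed simp

lemma wprod_swap_first:
  assumes "length u + length v + 1 = n"
  shows "wprod ((x::'a) # u @ y # v) = wprod (y # u @ x # v)"
proof (cases v rule: rev_cases)
  case Nil
  then show ?thesis using end_swap_Suc[of u x y] assms by simp
next
  case (snoc w z)
  have len: "length (w @ u) + 2 = n" using assms snoc by simp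
  have "wprod (x # u @ y # w @ [z]) = wprod (x # ((u @ [y]) @ w) @ [z])" by simp
  also have "\<dots> = wprod (x # rotate (length u + 1) ((u @ [y]) @ w) @ [z])"
    by (rule wprod_rotate_middle) (use len in simp)
  also have "\<dots> = wprod (x # (w @ u) @ [y, z])" by (simp add: rotate_append)
  also have "\<dots> = wprod (y # (w @ u) @ [x, z])" by (rule end_swap_snoc[OF len])
  also have "\<dots> = wprod (y # (w @ u @ [x]) @ [z])" by simp
  also have "\<dots> = wprod (y # rotate (length w) (w @ u @ [x]) @ [z])"
    by (rule wprod_rotate_middle) (use len in simp)
  also have "\<dots> = wprod (y # u @ x # w @ [z])" by (simp add: rotate_append)
  finally show ?thesis by (simp add: snoc)
qed

end

theorem theorem3p5:
  fixes s :: "'k::field \<Rightarrow> 'a::ring \<Rightarrow> 'a" and n :: nat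
  assumes "assoc_algebra s"
    and "n \<ge> 2"
    and "satisfies_identity TYPE('a) n (transpose 0 (n - 1))"
  shows "eventually_commutative TYPE('a) (n + 1)"
proof -
  have end_swap: "wprod (x # M @ [y]) = wprod (y # M @ [x])"
    if "length M + 2 = n" for x y :: 'a and M
    using assms(2,3) that satisfies_identity_transpose_0_iff[of "n - 1" n] by auto
  have "satisfies_identity TYPE('a) (n + 1) (transpose 0 j)" if "j < n + 1" for j
  proof (cases "j = 0")
    case True
    then show ?thesis by (simp add: satisfies_identity_def comp_def)
  next
    case False
    then show ?thesis
      using that wprod_swap_first[OF assms(2) end_swap]
      by (simp add: satisfies_identity_transpose_0_iff)
  qed
  then show ?thesis by (rule eventually_commutativeI)
qed

end
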